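(* Let $n\ge2$, $\rho\in\mathbb{C}\setminus\{-1,1\}$, let $z_k$ be a zero of $p_{2n}(\rho,z)$, and let $\lambda_k=\frac{z_k(1-\rho^2)}{(z_k-\rho)(1-\rho z_k)}$ be the corresponding eigenvalue of $K_n(\rho)$. Then $|z_k|=1$ iff $\lambda_k\in\mathrm{range}\{\sigma(\rho,\theta)\}$.
   Context: $K_n(\rho)=\left[\rho^{|j-k|}\right]_{j,k=1}^n$ (with $\rho^0=1$). $p_{2n}(\rho,z)=z^{2n}+(1+\rho^2)\sum_{k=1}^{n-1}z^{2k}-2\rho\sum_{k=0}^{n-1}z^{2k+1}+1$. For $\rho\neq\pm1$ no zero of $p_{2n}(\rho,\cdot)$ equals $\rho$ or $1/\rho$, so $\lambda_k$ is well defined, and it is an eigenvalue of $K_n(\rho)$. $\sigma(\rho,\theta)=\frac{1-\rho^2}{1-2\rho\cos\theta+\rho^2}$, and $\mathrm{range}\{\sigma(\rho,\theta)\}$ denotes the set of values $\sigma(\rho,\theta)$ for real $\theta\in(-\pi,\pi]$ (at which the denominator is nonzero). For $|\rho|<1$ this is the range of the symbol of the Laurent matrix associated with $K_n(\rho)$; for $|\rho|\ge1$ it is the range of the analytic continuation of that formula. *)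

theory Defs
  imports "HOL-Analysis.Analysis"
begin

definition p2n :: "nat \<Rightarrow> complex \<Rightarrow> complex \<Rightarrow> complex" where
  "p2n n \<rho> z = z ^ (2*n) + (1 + \<rho>\<^sup>2) * (\<Sum>k=1..n-1. z ^ (2*k))
     - 2 * \<rho> * (\<Sum>k=0..n-1. z ^ (2*k+1)) + 1"

definition sigma :: "complex \<Rightarrow> real \<Rightarrow> complex" where
  "sigma \<rho> \<theta> = (1 - \<rho>\<^sup>2) / (1 - 2 * \<rho> * complex_of_real (cos \<theta>) + \<rho>\<^sup>2)"

definition sigma_range :: "complex \<Rightarrow> complex set" where
  "sigma_range \<rho> = {sigma \<rho> \<theta> | \<theta>. \<theta> \<in> {-pi<..pi} \<and>
      1 - 2 * \<rho> * complex_of_real (cos \<theta>) + \<rho>\<^sup>2 \<noteq> 0}"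

definition lam :: "complex \<Rightarrow> complex \<Rightarrow> complex" where
  "lam \<rho> z = z * (1 - \<rho>\<^sup>2) / ((z - \<rho>) * (1 - \<rho> * z))"

end

(* Multiplying by 1 - z^2 collapses p_{2n} into (1 - rho z)^2 - z^{2n} (z - rho)^2,
   so a zero z avoids 0, rho and 1/rho.  Dividing numerator and denominator of
   lambda by z gives lambda = (1 - rho^2) / (1 + rho^2 - rho (z + 1/z)), hence for
   rho <> 0 the value lambda equals sigma(rho,theta) exactly when z + 1/z = 2 cos theta,
   i.e. z = e^{+-i theta}.  For rho = 0 both sides hold: lambda = sigma = 1, and
   z^{2n+2} = 1. *)
theory Submission
  imports Defs
begin

lemma p2n_Suc:
  assumes "n \<ge> 1"
  shows "p2n (Suc n) \<rho> z = p2n n \<rho> z + z ^ (2*n) * (z - \<rho>)\<^sup>2"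
proof -
  obtain m where n: "n = Suc m" using assms by (cases n) auto
  show ?thesis
    by (simp add: p2n_def n algebra_simps power2_eq_square)
qed

lemma one_minus_square_mult_p2n:
  assumes "n \<ge> 1"
  shows "(1 - z\<^sup>2) * p2n n \<rho> z = (1 - \<rho> * z)\<^sup>2 - z ^ (2*n) * (z - \<rho>)\<^sup>2"
  using assms
proof (induction n rule: nat_induct_at_least)
  case base
  show ?case by (simp add: p2n_def algebra_simps power2_eq_square)
next
  case (Suc n)
  then show ?case by (simp add: p2n_Suc algebra_simps power2_eq_square)
qed

lemma p2n_eq_0_imp_square_eq:
  assumes "p2n n \<rho> z = 0" and "n \<ge> 1"
  shows "(1 - \<rho> * z)\<^sup>2 = z ^ (2*n) * (z - \<rho>)\<^sup>2"
  using one_minus_square_mult_p2n[OF assms(2), of z \<rho>] assms(1) by simp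

lemma square_eq_imp_nonzero_factors:
  fixes \<rho> z :: complex
  assumes eq: "(1 - \<rho> * z)\<^sup>2 = z ^ m * (z - \<rho>)\<^sup>2" and "m \<ge> 1" and "\<rho>\<^sup>2 \<noteq> 1"
  shows "z \<noteq> 0" "z \<noteq> \<rho>" "1 - \<rho> * z \<noteq> 0"
proof -
  show "z \<noteq> 0" using eq \<open>m \<ge> 1\<close> by (auto simp: power_0_left)
  show "z \<noteq> \<rho>"
  proof
    assume "z = \<rho>"
    with eq have "(1 - \<rho>\<^sup>2)\<^sup>2 = 0" by (simp add: power2_eq_square)
    with \<open>\<rho>\<^sup>2 \<noteq> 1\<close> show False by simp
  qed
  with eq \<open>z \<noteq> 0\<close> show "1 - \<rho> * z \<noteq> 0" by auto
qed

lemma lam_denominator_eq: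
  fixes \<rho> z :: complex
  assumes "z \<noteq> 0"
  shows "(z - \<rho>) * (1 - \<rho> * z) = z * (1 + \<rho>\<^sup>2 - \<rho> * (z + inverse z))"
  using assms by (simp add: field_simps power2_eq_square)

lemma lam_eq:
  assumes "z \<noteq> 0"
  shows "lam \<rho> z = (1 - \<rho>\<^sup>2) / (1 + \<rho>\<^sup>2 - \<rho> * (z + inverse z))"
  using assms by (simp add: lam_def lam_denominator_eq)

lemma plus_inverse_eq_2cos_iff:
  fixes z :: complex
  assumes "z \<noteq> 0"
  shows "z + inverse z = 2 * of_real (cos t) \<longleftrightarrow> z = cis t \<or> z = cis (- t)"
proof -
  have "z + inverse z = 2 * of_real (cos t) \<longleftrightarrow> z * z - 2 * of_real (cos t) * z + 1 = 0"
    using assms by (auto simp: field_simps)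
  also have "z * z - 2 * of_real (cos t) * z + 1 = (z - cis t) * (z - cis (- t))"
    by (simp add: algebra_simps complex_eq_iff cis.ctr power2_eq_square cos_squared_eq)
  finally show ?thesis by simp
qed

lemma norm_eq_1_iff_plus_inverse_2cos:
  fixes z :: complex
  assumes "z \<noteq> 0"
  shows "cmod z = 1 \<longleftrightarrow> (\<exists>t \<in> {-pi<..pi}. z + inverse z = 2 * of_real (cos t))"
proof
  assume "cmod z = 1"
  then have "z = cis (Arg z)"
    using cis_Arg[OF assms] by (simp add: sgn_eq)
  moreover have "Arg z \<in> {-pi<..pi}"
    using Arg_bounded[of z] by auto
  ultimately show "\<exists>t \<in> {-pi<..pi}. z + inverse z = 2 * of_real (cos t)"
    using plus_inverse_eq_2cos_iff[OF assms] by blast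
next
  assume "\<exists>t \<in> {-pi<..pi}. z + inverse z = 2 * of_real (cos t)"
  then show "cmod z = 1"
    using plus_inverse_eq_2cos_iff[OF assms] by auto
qed

lemma sigma_eq_lam_iff:
  fixes \<rho> z :: complex
  assumes "\<rho> \<noteq> 0" and "\<rho>\<^sup>2 \<noteq> 1" and "z \<noteq> 0" and "z \<noteq> \<rho>" and "1 - \<rho> * z \<noteq> 0"
  shows "sigma \<rho> t = lam \<rho> z \<and> 1 - 2 * \<rho> * of_real (cos t) + \<rho>\<^sup>2 \<noteq> 0
    \<longleftrightarrow> z + inverse z = 2 * of_real (cos t)"
proof -
  define D where "D w = 1 + \<rho>\<^sup>2 - \<rho> * w" for w
  have sigma_D: "sigma \<rho> t = (1 - \<rho>\<^sup>2) / D (2 * of_real (cos t))"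
    and cos_D: "1 - 2 * \<rho> * of_real (cos t) + \<rho>\<^sup>2 = D (2 * of_real (cos t))"
    by (simp_all add: sigma_def D_def algebra_simps)
  have lam_D: "lam \<rho> z = (1 - \<rho>\<^sup>2) / D (z + inverse z)"
    using lam_eq[OF \<open>z \<noteq> 0\<close>] by (simp add: D_def)
  have "D (z + inverse z) \<noteq> 0"
    using lam_denominator_eq[OF \<open>z \<noteq> 0\<close>, of \<rho>] assms(4,5) by (auto simp: D_def)
  moreover have "1 - \<rho>\<^sup>2 \<noteq> 0"
    using \<open>\<rho>\<^sup>2 \<noteq> 1\<close> by simp
  moreover have "D w = D w' \<longleftrightarrow> w = w'" for w w'
    using \<open>\<rho> \<noteq> 0\<close> by (auto simp: D_def)
  ultimately show ?thesis
    unfolding sigma_D cos_D lam_D by (auto simp: divide_cancel_left)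
qed

lemma lam_in_sigma_range_iff:
  fixes \<rho> z :: complex
  assumes "\<rho> \<noteq> 0" and "\<rho>\<^sup>2 \<noteq> 1" and "z \<noteq> 0" and "z \<noteq> \<rho>" and "1 - \<rho> * z \<noteq> 0"
  shows "lam \<rho> z \<in> sigma_range \<rho> \<longleftrightarrow> cmod z = 1"
proof -
  have "lam \<rho> z \<in> sigma_range \<rho> \<longleftrightarrow>
      (\<exists>t \<in> {-pi<..pi}. sigma \<rho> t = lam \<rho> z \<and> 1 - 2 * \<rho> * of_real (cos t) + \<rho>\<^sup>2 \<noteq> 0)"
    unfolding sigma_range_def by (auto simp: Bex_def) metis
  also have "\<dots> \<longleftrightarrow> (\<exists>t \<in> {-pi<..pi}. z + inverse z = 2 * of_real (cos t))"
    using sigma_eq_lam_iff[OF assms] by blast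
  also have "\<dots> \<longleftrightarrow> cmod z = 1"
    using norm_eq_1_iff_plus_inverse_2cos[OF \<open>z \<noteq> 0\<close>] by blast
  finally show ?thesis .
qed

lemma lam_0_in_sigma_range_0:
  assumes "z \<noteq> 0"
  shows "lam 0 z \<in> sigma_range 0"
proof -
  have "lam 0 z = sigma 0 0"
    using assms by (simp add: lam_def sigma_def)
  then show ?thesis
    unfolding sigma_range_def by force
qed

theorem proposition3p4:
  fixes n :: nat and \<rho> z :: complex
  assumes "n \<ge> 2" and "\<rho> \<noteq> 1" and "\<rho> \<noteq> -1"
    and "p2n n \<rho> z = 0"
  shows "cmod z = 1 \<longleftrightarrow> lam \<rho> z \<in> sigma_range \<rho>"
proof -
  have root: "(1 - \<rho> * z)\<^sup>2 = z ^ (2*n) * (z - \<rho>)\<^sup>2"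
    using p2n_eq_0_imp_square_eq assms(1,4) by simp
  have "\<rho>\<^sup>2 \<noteq> 1"
    using assms(2,3) by (simp add: power2_eq_1_iff)
  with root assms(1) have "z \<noteq> 0" "z \<noteq> \<rho>" "1 - \<rho> * z \<noteq> 0"
    using square_eq_imp_nonzero_factors[of \<rho> z "2*n"] by auto
  show ?thesis
  proof (cases "\<rho> = 0")
    case True
    with root have "z ^ (2*n + 2) = 1"
      by (simp add: power_add power2_eq_square mult_ac)
    then have "cmod z = 1"
      using power_eq_1_iff by fastforce
    with True \<open>z \<noteq> 0\<close> show ?thesis
      using lam_0_in_sigma_range_0 by simp
  next
    case False
    with lam_in_sigma_range_iff \<open>\<rho>\<^sup>2 \<noteq> 1\<close> \<open>z \<noteq> 0\<close> \<open>z \<noteq> \<rho>\<close> \<open>1 - \<rho> * z \<noteq> 0\<close>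
    show ?thesis by metis
  qed
qed

end
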